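(* Let $p$ be a prime. Let $A$ be the classical divided power algebra over $\mathbb Z_{(p)}$ in a variable $y$, regarded as an ungraded ring. Let $\mathbf D$ be the classical divided power algebra over $A$ in a variable $x$, graded by the $x$-degree; equivalently, $\mathbf D$ is the classical divided power algebra over $\mathbb Z_{(p)}$ in two variables $x,y$. Then: - The ideal of $\mathbf D$ generated by $y^{[1]}$ and $x^{[1]}$ is not finitely presented. - $\mathbf D$ is neither graded-coherent (for the $x$-grading) nor coherent. - $\mathbf D$ is not graded-coherent with respect to its bigrading by $(x\text{-degree},y\text{-degree})$.
   Context: The classical divided power algebra over a commutative ring $R$ in a variable $z$ is the $R$-algebra that is free as an $R$-module on basis $z^{[i]}$ ($i\ge0$), with $z^{[n]}z^{[m]}=\binom{n+m}{n}z^{[n+m]}$. In two variables it is the tensor product over $R$ of the one-variable algebras, with basis $x^{[i]}y^{[j]}$. A (graded) ring is (graded-)coherent if every finitely generated (homogeneous) ideal is finitely presented. *)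

theory Defs
  imports Complex_Main "HOL-Computational_Algebra.Primes" "HOL-Algebra.Ideal" "HOL-Library.FuncSet"
begin

definition Zloc :: "nat \<Rightarrow> rat set" where
  "Zloc p = {q. coprime (int p) (snd (quotient_of q))}"

text \<open>An element is a finitely supported family of coefficients in Z_(p),
  indexed by (i,j), standing for sum of c(i,j) x^[i] y^[j].
  Multiplication: x^[a]y^[b] * x^[c]y^[d] = C(a+c,a) C(b+d,b) x^[a+c]y^[b+d].\<close>

definition DP2 :: "nat \<Rightarrow> (nat \<times> nat \<Rightarrow> rat) ring" where
  "DP2 p = \<lparr> carrier = {f. finite {k. f k \<noteq> 0} \<and> (\<forall>k. f k \<in> Zloc p)},
             mult = (\<lambda>f g. \<lambda>(n, m). \<Sum>i\<le>n. \<Sum>j\<le>m.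
                        of_nat (n choose i) * of_nat (m choose j) * f (i, j) * g (n - i, m - j)),
             one = (\<lambda>k. if k = (0, 0) then 1 else 0),
             zero = (\<lambda>k. 0),
             add = (\<lambda>f g k. f k + g k) \<rparr>"

definition dpmon :: "nat \<Rightarrow> nat \<Rightarrow> (nat \<times> nat \<Rightarrow> rat)" where
  "dpmon i j = (\<lambda>k. if k = (i, j) then 1 else 0)"

definition lin_comb :: "('a, 'b) ring_scheme \<Rightarrow> nat \<Rightarrow> (nat \<Rightarrow> 'a) \<Rightarrow> (nat \<Rightarrow> 'a) \<Rightarrow> 'a" where
  "lin_comb R n r g = finsum R (\<lambda>i. r i \<otimes>\<^bsub>R\<^esub> g i) {..<n}"

definition syzygies :: "('a, 'b) ring_scheme \<Rightarrow> nat \<Rightarrow> (nat \<Rightarrow> 'a) \<Rightarrow> (nat \<Rightarrow> 'a) set" where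
  "syzygies R n g = {r. r \<in> {..<n} \<rightarrow> carrier R \<and> lin_comb R n r g = \<zero>\<^bsub>R\<^esub>}"

definition finitely_generated_ideal :: "('a, 'b) ring_scheme \<Rightarrow> 'a set \<Rightarrow> bool" where
  "finitely_generated_ideal R I \<longleftrightarrow>
     (\<exists>S. finite S \<and> S \<subseteq> carrier R \<and> I = genideal R S)"

definition finitely_presented_ideal :: "('a, 'b) ring_scheme \<Rightarrow> 'a set \<Rightarrow> bool" where
  "finitely_presented_ideal R I \<longleftrightarrow>
     (\<exists>n g. g \<in> {..<n} \<rightarrow> carrier R \<and> I = genideal R (g ` {..<n}) \<and>
        (\<exists>(m::nat) s. (\<forall>k<m. s k \<in> syzygies R n g) \<and>
           (\<forall>r\<in>syzygies R n g. \<exists>c. c \<in> {..<m} \<rightarrow> carrier R \<and>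
               (\<forall>i<n. r i = finsum R (\<lambda>k. c k \<otimes>\<^bsub>R\<^esub> s k i) {..<m}))))"

definition coherent :: "('a, 'b) ring_scheme \<Rightarrow> bool" where
  "coherent R \<longleftrightarrow>
     (\<forall>I. ideal I R \<and> finitely_generated_ideal R I \<longrightarrow> finitely_presented_ideal R I)"

definition graded_coherent :: "('a, 'b) ring_scheme \<Rightarrow> ('a set \<Rightarrow> bool) \<Rightarrow> bool" where
  "graded_coherent R homogeneous \<longleftrightarrow>
     (\<forall>I. ideal I R \<and> homogeneous I \<and> finitely_generated_ideal R I
          \<longrightarrow> finitely_presented_ideal R I)"

definition x_homogeneous :: "(nat \<times> nat \<Rightarrow> rat) set \<Rightarrow> bool" where
  "x_homogeneous I \<longleftrightarrow>
     (\<forall>f\<in>I. \<forall>d. (\<lambda>(i, j). if i = d then f (i, j) else 0) \<in> I)"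

definition bi_homogeneous :: "(nat \<times> nat \<Rightarrow> rat) set \<Rightarrow> bool" where
  "bi_homogeneous I \<longleftrightarrow>
     (\<forall>f\<in>I. \<forall>d e. (\<lambda>k. if k = (d, e) then f k else 0) \<in> I)"

end

theory Submission
  imports Defs "HOL-Computational_Algebra.Formal_Power_Series"
begin

text \<open>The ideal (x, y) = (x^[1], y^[1]) is finitely generated and bihomogeneous, so everything
  follows once it is shown not to be finitely presented. Suppose it were, with generators
  g_i = x u_i + y v_i and finitely many syzygies s_k generating all syzygies of the g_i. Each s_k gives
  a relation x w_k + y z_k = 0, and comparing coefficients yields (a + 1) w_k(a, b) = -b z_k(a + 1, b - 1).
  If all w_k have x-degree below N and P = p^(N!), this makes N! c / P p-integral for the
  (P - 1, P)-coefficient c of every D-linear combination of the w_k. But the relation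
  x^[P] y^[P-1] y = x^[P-1] y^[P] x yields a syzygy of the g_i whose combination has c = -1,
  so P would divide N! < P.\<close>

lemma Zloc_iff:
  "q \<in> Zloc p \<longleftrightarrow> (\<exists>a b. b > 0 \<and> coprime (int p) b \<and> q = of_int a / of_int b)"
proof -
  obtain n d where nd: "quotient_of q = (n, d)" by fastforce
  have d: "d > 0" "coprime n d" "q = of_int n / of_int d"
    using quotient_of_div[OF nd] quotient_of_denom_pos[OF nd] quotient_of_coprime[OF nd] by auto
  show ?thesis
  proof
    assume "q \<in> Zloc p"
    then show "\<exists>a b. b > 0 \<and> coprime (int p) b \<and> q = of_int a / of_int b"
      using nd d unfolding Zloc_def by auto
  next
    assume "\<exists>a b. b > 0 \<and> coprime (int p) b \<and> q = of_int a / of_int b"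
    then obtain a b where ab: "b > 0" "coprime (int p) b" "q = of_int a / of_int b" by blast
    have "of_int n * of_int b = (of_int a * of_int d :: rat)"
      using ab d by (simp add: field_simps)
    then have "n * b = a * d" by (metis of_int_eq_iff of_int_mult)
    then have "d dvd n * b" by simp
    moreover have "coprime d n" using d(2) by (simp add: ac_simps)
    ultimately have "d dvd b" by (simp add: coprime_dvd_mult_right_iff)
    then have "coprime (int p) d" by (rule coprime_divisors[OF dvd_refl _ ab(2)])
    then show "q \<in> Zloc p" using nd unfolding Zloc_def by simp
  qed
qed

lemma Zloc_add: "a \<in> Zloc p \<Longrightarrow> b \<in> Zloc p \<Longrightarrow> a + b \<in> Zloc p"
proof -
  assume "a \<in> Zloc p" "b \<in> Zloc p"
  then obtain x y u v where "y > 0" "coprime (int p) y" "a = of_int x / of_int y"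
    and "v > 0" "coprime (int p) v" "b = of_int u / of_int v" unfolding Zloc_iff by blast
  then have "a + b = of_int (x * v + u * y) / of_int (y * v)" "y * v > 0" "coprime (int p) (y * v)"
    by (auto simp: field_simps)
  then show ?thesis unfolding Zloc_iff by blast
qed

lemma Zloc_mult: "a \<in> Zloc p \<Longrightarrow> b \<in> Zloc p \<Longrightarrow> a * b \<in> Zloc p"
proof -
  assume "a \<in> Zloc p" "b \<in> Zloc p"
  then obtain x y u v where "y > 0" "coprime (int p) y" "a = of_int x / of_int y"
    and "v > 0" "coprime (int p) v" "b = of_int u / of_int v" unfolding Zloc_iff by blast
  then have "a * b = of_int (x * u) / of_int (y * v)" "y * v > 0" "coprime (int p) (y * v)"
    by auto
  then show ?thesis unfolding Zloc_iff by blast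
qed

lemma Zloc_of_int [simp]: "of_int a \<in> Zloc p"
  unfolding Zloc_iff by (rule exI[of _ a], rule exI[of _ 1]) auto

lemma Zloc_of_nat [simp]: "of_nat a \<in> Zloc p"
  using Zloc_of_int[of "int a" p] by simp

lemma Zloc_0 [simp]: "0 \<in> Zloc p" and Zloc_1 [simp]: "1 \<in> Zloc p"
  using Zloc_of_nat[of 0 p] Zloc_of_nat[of 1 p] by auto

lemma Zloc_uminus: "a \<in> Zloc p \<Longrightarrow> - a \<in> Zloc p"
  using Zloc_mult[OF Zloc_of_int[of "-1"]] by fastforce

lemma Zloc_sum: "(\<And>i. i \<in> A \<Longrightarrow> f i \<in> Zloc p) \<Longrightarrow> sum f A \<in> Zloc p"
  by (induction A rule: infinite_finite_induct) (auto intro: Zloc_add)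

lemma prime_power_dvd_if_div_in_Zloc:
  assumes "of_nat M / of_nat (p ^ K) \<in> Zloc p" and "p > 0"
  shows "p ^ K dvd M"
proof -
  obtain a b where ab: "b > 0" "coprime (int p) b"
      "of_nat M / of_nat (p ^ K) = (of_int a / of_int b :: rat)"
    using assms(1) unfolding Zloc_iff by blast
  have "rat_of_int (int M * b) = rat_of_int (a * int (p ^ K))"
    using ab assms(2) by (simp add: field_simps)
  then have "int (p ^ K) dvd int M * b"
    by (simp only: of_int_eq_iff) simp
  moreover have "coprime (int (p ^ K)) b" using ab(2) by simp
  ultimately show ?thesis
    by (metis coprime_dvd_mult_left_iff int_dvd_int_iff)
qed

context cring
begin

lemma lin_comb_closed:
  assumes "a \<in> {..<n} \<rightarrow> carrier R" "g \<in> {..<n} \<rightarrow> carrier R"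
  shows "lin_comb R n a g \<in> carrier R"
  unfolding lin_comb_def using assms by (intro finsum_closed) auto

lemma lin_comb_add:
  assumes "a \<in> {..<n} \<rightarrow> carrier R" "b \<in> {..<n} \<rightarrow> carrier R" "g \<in> {..<n} \<rightarrow> carrier R"
  shows "lin_comb R n a g \<oplus> lin_comb R n b g = lin_comb R n (\<lambda>i. a i \<oplus> b i) g"
proof -
  have "(\<Oplus>i\<in>{..<n}. (a i \<oplus> b i) \<otimes> g i) = (\<Oplus>i\<in>{..<n}. a i \<otimes> g i \<oplus> b i \<otimes> g i)"
    using assms by (intro finsum_cong') (auto simp: Pi_iff l_distr)
  also have "\<dots> = (\<Oplus>i\<in>{..<n}. a i \<otimes> g i) \<oplus> (\<Oplus>i\<in>{..<n}. b i \<otimes> g i)"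
    using assms by (intro finsum_addf) auto
  finally show ?thesis unfolding lin_comb_def by simp
qed

lemma lin_comb_smult:
  assumes "x \<in> carrier R" "a \<in> {..<n} \<rightarrow> carrier R" "g \<in> {..<n} \<rightarrow> carrier R"
  shows "x \<otimes> lin_comb R n a g = lin_comb R n (\<lambda>i. x \<otimes> a i) g"
  unfolding lin_comb_def using assms
  by (subst finsum_rdistr) (auto intro!: finsum_cong' simp: Pi_iff m_assoc)

lemma lin_comb_unit_vector:
  assumes "j < n" "g \<in> {..<n} \<rightarrow> carrier R"
  shows "lin_comb R n (\<lambda>i. if i = j then \<one> else \<zero>) g = g j"
proof -
  have "lin_comb R n (\<lambda>i. if i = j then \<one> else \<zero>) g = (\<Oplus>i\<in>{..<n}. if j = i then g i else \<zero>)"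
    unfolding lin_comb_def using assms by (intro finsum_cong') (auto simp: Pi_iff)
  also have "\<dots> = g j" using assms by (intro add.finprod_singleton) auto
  finally show ?thesis .
qed

lemma lin_combs_ideal:
  assumes g: "g \<in> {..<n} \<rightarrow> carrier R"
  shows "ideal {lin_comb R n a g | a. a \<in> {..<n} \<rightarrow> carrier R} R" (is "ideal ?L R")
proof (rule idealI)
  have smult: "x \<otimes> h \<in> ?L" if "h \<in> ?L" "x \<in> carrier R" for x h
    using that lin_comb_smult[OF _ _ g] by fastforce
  have carr: "?L \<subseteq> carrier R" using lin_comb_closed[OF _ g] by blast
  show "subgroup ?L (add_monoid R)"
  proof (rule add.subgroupI)
    show "?L \<noteq> {}" by blast
    show "\<ominus> h \<in> ?L" if "h \<in> ?L" for h
    proof -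
      have "\<ominus> h = \<ominus> \<one> \<otimes> h" using that carr by (auto simp: l_minus)
      then show ?thesis using smult[OF that] by simp
    qed
    show "h \<oplus> k \<in> ?L" if "h \<in> ?L" "k \<in> ?L" for h k
      using that lin_comb_add[OF _ _ g] by fastforce
  qed (use carr in simp)
  show "x \<otimes> h \<in> ?L" if "h \<in> ?L" "x \<in> carrier R" for x h
    using smult that by blast
  show "h \<otimes> x \<in> ?L" if "h \<in> ?L" "x \<in> carrier R" for x h
  proof -
    have "h \<otimes> x = x \<otimes> h" using that carr by (blast intro: m_comm)
    then show ?thesis using smult that by simp
  qed
qed (rule ring_axioms)

lemma genideal_lin_comb:
  assumes g: "g \<in> {..<n} \<rightarrow> carrier R" and h: "h \<in> Idl (g ` {..<n})"
  obtains a where "a \<in> {..<n} \<rightarrow> carrier R" "h = lin_comb R n a g"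
proof -
  have "g ` {..<n} \<subseteq> {lin_comb R n a g | a. a \<in> {..<n} \<rightarrow> carrier R}"
  proof
    fix y assume "y \<in> g ` {..<n}"
    then obtain j where "j < n" "y = g j" by auto
    then have "y = lin_comb R n (\<lambda>i. if i = j then \<one> else \<zero>) g"
      using lin_comb_unit_vector g by simp
    then show "y \<in> {lin_comb R n a g | a. a \<in> {..<n} \<rightarrow> carrier R}" by force
  qed
  then show ?thesis
    using genideal_minimal[OF lin_combs_ideal[OF g]] h that by blast
qed

end

lemma DP2_carrier: "carrier (DP2 p) = {f. finite {k. f k \<noteq> 0} \<and> (\<forall>k. f k \<in> Zloc p)}"
  and DP2_mult: "(f \<otimes>\<^bsub>DP2 p\<^esub> g) (n, m) = (\<Sum>i\<le>n. \<Sum>j\<le>m.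
       of_nat (n choose i) * of_nat (m choose j) * f (i, j) * g (n - i, m - j))"
  and DP2_one: "\<one>\<^bsub>DP2 p\<^esub> = (\<lambda>k. if k = (0, 0) then 1 else 0)"
  and DP2_zero: "\<zero>\<^bsub>DP2 p\<^esub> = (\<lambda>k. 0)"
  and DP2_add: "f \<oplus>\<^bsub>DP2 p\<^esub> g = (\<lambda>k. f k + g k)"
  by (auto simp: DP2_def)

lemma DP2_mult_closed:
  assumes f: "f \<in> carrier (DP2 p)" and g: "g \<in> carrier (DP2 p)"
  shows "f \<otimes>\<^bsub>DP2 p\<^esub> g \<in> carrier (DP2 p)"
proof -
  have "{k. (f \<otimes>\<^bsub>DP2 p\<^esub> g) k \<noteq> 0} \<subseteq>
      (\<lambda>((i, j), (i', j')). (i + i', j + j')) ` ({k. f k \<noteq> 0} \<times> {k. g k \<noteq> 0})"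
  proof clarify
    fix n m assume "(f \<otimes>\<^bsub>DP2 p\<^esub> g) (n, m) \<noteq> 0"
    then obtain i j where "i \<le> n" "j \<le> m" "f (i, j) \<noteq> 0" "g (n - i, m - j) \<noteq> 0"
      unfolding DP2_mult by (metis (no_types, lifting) atMost_iff mult_not_zero sum.neutral)
    then show "(n, m) \<in> (\<lambda>((i, j), (i', j')). (i + i', j + j')) ` ({k. f k \<noteq> 0} \<times> {k. g k \<noteq> 0})"
      by (auto intro!: image_eqI[of _ _ "((i, j), (n - i, m - j))"])
  qed
  moreover have "(f \<otimes>\<^bsub>DP2 p\<^esub> g) (n, m) \<in> Zloc p" for n m
    unfolding DP2_mult using f g
    by (intro Zloc_sum Zloc_mult Zloc_of_nat) (auto simp: DP2_carrier)
  ultimately show ?thesis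
    using f g by (auto simp: DP2_carrier intro: finite_subset)
qed

lemma DP2_add_closed:
  assumes "f \<in> carrier (DP2 p)" "g \<in> carrier (DP2 p)"
  shows "f \<oplus>\<^bsub>DP2 p\<^esub> g \<in> carrier (DP2 p)"
proof -
  have "{k. f k + g k \<noteq> 0} \<subseteq> {k. f k \<noteq> 0} \<union> {k. g k \<noteq> 0}" by auto
  then show ?thesis
    using assms by (auto simp: DP2_carrier DP2_add intro: Zloc_add finite_subset)
qed

lemma DP2_restrict_closed:
  "f \<in> carrier (DP2 p) \<Longrightarrow> (\<lambda>k. if k \<in> S then f k else 0) \<in> carrier (DP2 p)"
  by (auto simp: DP2_carrier elim: rev_finite_subset)

lemma dpmon_closed: "dpmon i j \<in> carrier (DP2 p)"
proof -
  have "{k. dpmon i j k \<noteq> 0} = {(i, j)}" by (auto simp: dpmon_def)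
  then show ?thesis by (auto simp: DP2_carrier dpmon_def)
qed

text \<open>Sending x^[i] y^[j] to x^i y^j / (i! j!) embeds the divided power algebra into
  Q[[x]][[y]]; ring identities in DP2 are proved there.\<close>

definition dp_egf :: "(nat \<times> nat \<Rightarrow> rat) \<Rightarrow> rat fps fps" where
  "dp_egf f = Abs_fps (\<lambda>i. Abs_fps (\<lambda>j. f (i, j) / (fact i * fact j)))"

lemma dp_egf_nth [simp]: "fps_nth (fps_nth (dp_egf f) i) j = f (i, j) / (fact i * fact j)"
  by (simp add: dp_egf_def)

lemma dp_egf_inject: "dp_egf f = dp_egf g \<Longrightarrow> f = g"
proof
  fix k assume "dp_egf f = dp_egf g"
  then have "fps_nth (fps_nth (dp_egf f) (fst k)) (snd k) =
      fps_nth (fps_nth (dp_egf g) (fst k)) (snd k)"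
    by simp
  then show "f k = g k" by simp
qed

lemma dp_egf_add: "dp_egf (f \<oplus>\<^bsub>DP2 p\<^esub> g) = dp_egf f + dp_egf g"
  by (intro fps_ext) (simp add: DP2_add add_divide_distrib)

lemma dp_egf_zero: "dp_egf \<zero>\<^bsub>DP2 p\<^esub> = 0"
  by (intro fps_ext) (simp add: DP2_zero)

lemma dp_egf_one: "dp_egf \<one>\<^bsub>DP2 p\<^esub> = 1"
  by (intro fps_ext) (auto simp: DP2_one)

lemma dp_egf_mult: "dp_egf (f \<otimes>\<^bsub>DP2 p\<^esub> g) = dp_egf f * dp_egf g"
proof (intro fps_ext)
  fix n m
  have "fps_nth (fps_nth (dp_egf f * dp_egf g) n) m
      = (\<Sum>i\<le>n. \<Sum>j\<le>m. fps_nth (fps_nth (dp_egf f) i) j * fps_nth (fps_nth (dp_egf g) (n - i)) (m - j))"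
    by (simp add: fps_mult_nth fps_sum_nth atLeast0AtMost)
  also have "\<dots> = (\<Sum>i\<le>n. \<Sum>j\<le>m. of_nat (n choose i) * of_nat (m choose j) * f (i, j) * g (n - i, m - j)
                     / (fact n * fact m))"
    by (intro sum.cong refl) (simp add: binomial_fact field_simps)
  also have "\<dots> = fps_nth (fps_nth (dp_egf (f \<otimes>\<^bsub>DP2 p\<^esub> g)) n) m"
    by (simp add: DP2_mult sum_divide_distrib)
  finally show "fps_nth (fps_nth (dp_egf (f \<otimes>\<^bsub>DP2 p\<^esub> g)) n) m =
      fps_nth (fps_nth (dp_egf f * dp_egf g) n) m"
    by simp
qed

lemma cring_DP2: "cring (DP2 p)"
proof (rule cringI)
  show "abelian_group (DP2 p)"
  proof (rule abelian_groupI)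
    fix f assume "f \<in> carrier (DP2 p)"
    then have "(\<lambda>k. - f k) \<in> carrier (DP2 p)" by (auto simp: DP2_carrier intro: Zloc_uminus)
    then show "\<exists>g\<in>carrier (DP2 p). g \<oplus>\<^bsub>DP2 p\<^esub> f = \<zero>\<^bsub>DP2 p\<^esub>"
      by (intro bexI[of _ "\<lambda>k. - f k"]) (auto simp: DP2_add DP2_zero)
  next
    show "\<zero>\<^bsub>DP2 p\<^esub> \<in> carrier (DP2 p)" by (simp add: DP2_carrier DP2_zero)
  qed (auto simp: DP2_add_closed[unfolded DP2_add] DP2_add DP2_zero add.assoc add.commute)
  show "comm_monoid (DP2 p)"
  proof (rule comm_monoidI)
    have "{k. \<one>\<^bsub>DP2 p\<^esub> k \<noteq> 0} = {(0, 0)}" by (auto simp: DP2_one)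
    then show "\<one>\<^bsub>DP2 p\<^esub> \<in> carrier (DP2 p)" by (auto simp: DP2_carrier DP2_one)
  qed (auto intro: DP2_mult_closed dp_egf_inject simp: dp_egf_mult dp_egf_one mult_ac)
qed (auto intro: dp_egf_inject simp: dp_egf_mult dp_egf_add distrib_right)

interpretation DP2: cring "DP2 p" for p
  by (rule cring_DP2)

lemma DP2_minus:
  assumes "f \<in> carrier (DP2 p)" "g \<in> carrier (DP2 p)"
  shows "f \<ominus>\<^bsub>DP2 p\<^esub> g = (\<lambda>k. f k - g k)"
proof -
  have "(\<lambda>k. - g k) \<in> carrier (DP2 p)" "(\<lambda>k. - g k) \<oplus>\<^bsub>DP2 p\<^esub> g = \<zero>\<^bsub>DP2 p\<^esub>"
    using assms(2) by (auto simp: DP2_carrier DP2_add DP2_zero intro: Zloc_uminus)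
  then have "\<ominus>\<^bsub>DP2 p\<^esub> g = (\<lambda>k. - g k)" using assms(2) DP2.minus_equality by blast
  then show ?thesis by (simp add: a_minus_def DP2_add)
qed

lemma dp_egf_minus:
  "f \<in> carrier (DP2 p) \<Longrightarrow> g \<in> carrier (DP2 p) \<Longrightarrow> dp_egf (f \<ominus>\<^bsub>DP2 p\<^esub> g) = dp_egf f - dp_egf g"
  by (intro fps_ext) (simp add: DP2_minus diff_divide_distrib)

lemma DP2_finsum_apply:
  "finite A \<Longrightarrow> F \<in> A \<rightarrow> carrier (DP2 p) \<Longrightarrow> finsum (DP2 p) F A k = (\<Sum>a\<in>A. F a k)"
  by (induction A rule: finite_induct) (auto simp: DP2_zero DP2_add)

lemma dp_egf_finsum:
  "finite A \<Longrightarrow> F \<in> A \<rightarrow> carrier (DP2 p) \<Longrightarrow> dp_egf (finsum (DP2 p) F A) = (\<Sum>a\<in>A. dp_egf (F a))"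
  by (induction A rule: finite_induct) (auto simp: dp_egf_zero dp_egf_add)

lemma dp_egf_lin_comb:
  "a \<in> {..<n} \<rightarrow> carrier (DP2 p) \<Longrightarrow> g \<in> {..<n} \<rightarrow> carrier (DP2 p) \<Longrightarrow>
   dp_egf (lin_comb (DP2 p) n a g) = (\<Sum>i<n. dp_egf (a i) * dp_egf (g i))"
  unfolding lin_comb_def by (subst dp_egf_finsum) (auto simp: dp_egf_mult)

lemma DP2_lin_comb_smult_diff:
  assumes x: "x \<in> carrier (DP2 p)" and y: "y \<in> carrier (DP2 p)"
    and a: "a \<in> {..<n} \<rightarrow> carrier (DP2 p)" and b: "b \<in> {..<n} \<rightarrow> carrier (DP2 p)"
    and h: "h \<in> {..<n} \<rightarrow> carrier (DP2 p)"
  shows "lin_comb (DP2 p) n (\<lambda>i. x \<otimes>\<^bsub>DP2 p\<^esub> a i \<ominus>\<^bsub>DP2 p\<^esub> y \<otimes>\<^bsub>DP2 p\<^esub> b i) h =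
    x \<otimes>\<^bsub>DP2 p\<^esub> lin_comb (DP2 p) n a h \<ominus>\<^bsub>DP2 p\<^esub> y \<otimes>\<^bsub>DP2 p\<^esub> lin_comb (DP2 p) n b h"
proof (rule dp_egf_inject)
  have r: "(\<lambda>i. x \<otimes>\<^bsub>DP2 p\<^esub> a i \<ominus>\<^bsub>DP2 p\<^esub> y \<otimes>\<^bsub>DP2 p\<^esub> b i) \<in> {..<n} \<rightarrow> carrier (DP2 p)"
    using x y a b by (auto intro!: DP2.minus_closed DP2_mult_closed)
  have egf_r: "dp_egf (x \<otimes>\<^bsub>DP2 p\<^esub> a i \<ominus>\<^bsub>DP2 p\<^esub> y \<otimes>\<^bsub>DP2 p\<^esub> b i)
      = dp_egf x * dp_egf (a i) - dp_egf y * dp_egf (b i)" if "i < n" for i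
  proof -
    have "a i \<in> carrier (DP2 p)" "b i \<in> carrier (DP2 p)" using a b that by auto
    then show ?thesis using x y by (simp add: dp_egf_minus dp_egf_mult DP2_mult_closed)
  qed
  have "dp_egf (lin_comb (DP2 p) n (\<lambda>i. x \<otimes>\<^bsub>DP2 p\<^esub> a i \<ominus>\<^bsub>DP2 p\<^esub> y \<otimes>\<^bsub>DP2 p\<^esub> b i) h) =
      (\<Sum>i<n. (dp_egf x * dp_egf (a i) - dp_egf y * dp_egf (b i)) * dp_egf (h i))"
    using r h by (auto simp: dp_egf_lin_comb egf_r intro!: sum.cong)
  also have "\<dots> = dp_egf (x \<otimes>\<^bsub>DP2 p\<^esub> lin_comb (DP2 p) n a h \<ominus>\<^bsub>DP2 p\<^esub> y \<otimes>\<^bsub>DP2 p\<^esub> lin_comb (DP2 p) n b h)"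
    using x y a b h
    by (simp add: dp_egf_lin_comb dp_egf_minus dp_egf_mult DP2_mult_closed DP2.lin_comb_closed
        sum_distrib_left sum_subtractf algebra_simps)
  finally show "dp_egf (lin_comb (DP2 p) n (\<lambda>i. x \<otimes>\<^bsub>DP2 p\<^esub> a i \<ominus>\<^bsub>DP2 p\<^esub> y \<otimes>\<^bsub>DP2 p\<^esub> b i) h) =
      dp_egf (x \<otimes>\<^bsub>DP2 p\<^esub> lin_comb (DP2 p) n a h \<ominus>\<^bsub>DP2 p\<^esub> y \<otimes>\<^bsub>DP2 p\<^esub> lin_comb (DP2 p) n b h)" .
qed

lemma DP2_lin_comb_finsum_coeffs:
  fixes m :: nat
  assumes c: "c \<in> {..<m} \<rightarrow> carrier (DP2 p)" and s: "\<forall>k<m. s k \<in> {..<n} \<rightarrow> carrier (DP2 p)"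
    and u: "u \<in> {..<n} \<rightarrow> carrier (DP2 p)"
    and r: "\<forall>i<n. r i = (\<Oplus>\<^bsub>DP2 p\<^esub>k\<in>{..<m}. c k \<otimes>\<^bsub>DP2 p\<^esub> s k i)"
  shows "lin_comb (DP2 p) n r u = (\<Oplus>\<^bsub>DP2 p\<^esub>k\<in>{..<m}. c k \<otimes>\<^bsub>DP2 p\<^esub> lin_comb (DP2 p) n (s k) u)"
proof (rule dp_egf_inject)
  have egf_r: "dp_egf (r i) = (\<Sum>k<m. dp_egf (c k) * dp_egf (s k i))" if "i < n" for i
    unfolding r[rule_format, OF that] using c s that
    by (subst dp_egf_finsum) (auto simp: dp_egf_mult intro!: DP2_mult_closed)
  have r_closed: "r \<in> {..<n} \<rightarrow> carrier (DP2 p)"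
    using c s r by (auto simp: Pi_iff intro!: DP2.finsum_closed DP2_mult_closed)
  have "dp_egf (lin_comb (DP2 p) n r u) =
      (\<Sum>i<n. (\<Sum>k<m. dp_egf (c k) * dp_egf (s k i)) * dp_egf (u i))"
    using r_closed u by (simp add: dp_egf_lin_comb egf_r)
  also have "\<dots> = (\<Sum>k<m. dp_egf (c k) * (\<Sum>i<n. dp_egf (s k i) * dp_egf (u i)))"
    unfolding sum_distrib_left sum_distrib_right mult.assoc by (rule sum.swap)
  also have "\<dots> = dp_egf (\<Oplus>\<^bsub>DP2 p\<^esub>k\<in>{..<m}. c k \<otimes>\<^bsub>DP2 p\<^esub> lin_comb (DP2 p) n (s k) u)"
    using c s u
    by (simp add: dp_egf_finsum dp_egf_mult dp_egf_lin_comb Pi_iff DP2_mult_closed DP2.lin_comb_closed)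
  finally show "dp_egf (lin_comb (DP2 p) n r u) =
      dp_egf (\<Oplus>\<^bsub>DP2 p\<^esub>k\<in>{..<m}. c k \<otimes>\<^bsub>DP2 p\<^esub> lin_comb (DP2 p) n (s k) u)" .
qed

lemma DP2_x_degree_bound:
  fixes m :: nat
  assumes "w \<in> {..<m} \<rightarrow> carrier (DP2 p)"
  obtains N where "\<forall>k<m. \<forall>i j. w k (i, j) \<noteq> 0 \<longrightarrow> i < N"
proof -
  have "finite (\<Union>k<m. fst ` {q. w k q \<noteq> 0})" using assms by (auto simp: DP2_carrier)
  then obtain N where "\<forall>i \<in> (\<Union>k<m. fst ` {q. w k q \<noteq> 0}). i < N"
    unfolding finite_nat_set_iff_bounded by blast
  then have "\<forall>k<m. \<forall>i j. w k (i, j) \<noteq> 0 \<longrightarrow> i < N" by fastforce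
  then show ?thesis by (rule that)
qed

lemma sum_atMost_delta2:
  fixes n m :: nat
  shows "(\<Sum>i\<le>n. \<Sum>j\<le>m. if i = a \<and> j = b then h i j else 0) =
    (if a \<le> n \<and> b \<le> m then h a b else 0)"
proof -
  have "(\<Sum>j\<le>m. if i = a \<and> j = b then h i j else 0) =
      (if i = a then if b \<le> m then h a b else 0 else 0)" for i
    by (cases "i = a") (auto simp: sum.delta)
  then show ?thesis by (simp add: sum.delta)
qed

lemma dpmon_mult:
  "(dpmon a b \<otimes>\<^bsub>DP2 p\<^esub> f) (n, m) =
     (if a \<le> n \<and> b \<le> m then of_nat (n choose a) * of_nat (m choose b) * f (n - a, m - b) else 0)"
proof -
  have "(dpmon a b \<otimes>\<^bsub>DP2 p\<^esub> f) (n, m) = (\<Sum>i\<le>n. \<Sum>j\<le>m. if i = a \<and> j = b then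
          of_nat (n choose i) * of_nat (m choose j) * f (n - i, m - j) else 0)"
    unfolding DP2_mult by (intro sum.cong refl) (auto simp: dpmon_def)
  then show ?thesis by (simp only: sum_atMost_delta2)
qed

lemma dpmon_10_mult: "(dpmon 1 0 \<otimes>\<^bsub>DP2 p\<^esub> f) (a, b) = (if 1 \<le> a then of_nat a * f (a - 1, b) else 0)"
  by (simp add: dpmon_mult)

lemma dpmon_01_mult: "(dpmon 0 1 \<otimes>\<^bsub>DP2 p\<^esub> f) (a, b) = (if 1 \<le> b then of_nat b * f (a, b - 1) else 0)"
  by (simp add: dpmon_mult)

lemma dpmon_mult_y_eq_mult_x:
  assumes "P \<ge> 1"
  shows "dpmon P (P - 1) \<otimes>\<^bsub>DP2 p\<^esub> dpmon 0 1 = dpmon (P - 1) P \<otimes>\<^bsub>DP2 p\<^esub> dpmon 1 0"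
proof (rule ext, clarify)
  fix i j
  show "(dpmon P (P - 1) \<otimes>\<^bsub>DP2 p\<^esub> dpmon 0 1) (i, j) = (dpmon (P - 1) P \<otimes>\<^bsub>DP2 p\<^esub> dpmon 1 0) (i, j)"
    unfolding dpmon_mult using assms by (auto simp: dpmon_def)
qed

lemma dpmon_10_cofactor_coeff:
  assumes "dpmon 1 0 = dpmon 1 0 \<otimes>\<^bsub>DP2 p\<^esub> u \<oplus>\<^bsub>DP2 p\<^esub> dpmon 0 1 \<otimes>\<^bsub>DP2 p\<^esub> v"
  shows "u (0, 0) = 1"
proof -
  from fun_cong[OF assms, of "(1, 0)"] show ?thesis
    unfolding DP2_add dpmon_10_mult dpmon_01_mult by (simp add: dpmon_def)
qed

abbreviation xy_ideal :: "nat \<Rightarrow> (nat \<times> nat \<Rightarrow> rat) set" where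
  "xy_ideal p \<equiv> genideal (DP2 p) {dpmon 0 1, dpmon 1 0}"

lemma xy_ideal_ideal: "ideal (xy_ideal p) (DP2 p)"
  by (rule DP2.genideal_ideal) (auto simp: dpmon_closed)

lemma xy_ideal_finitely_generated: "finitely_generated_ideal (DP2 p) (xy_ideal p)"
  unfolding finitely_generated_ideal_def
  by (intro exI[of _ "{dpmon 0 1, dpmon 1 0}"]) (auto simp: dpmon_closed)

lemma xy_ideal_eq:
  "xy_ideal p = {dpmon 1 0 \<otimes>\<^bsub>DP2 p\<^esub> u \<oplus>\<^bsub>DP2 p\<^esub> dpmon 0 1 \<otimes>\<^bsub>DP2 p\<^esub> v
                  | u v. u \<in> carrier (DP2 p) \<and> v \<in> carrier (DP2 p)}" (is "_ = ?M")
proof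
  let ?g = "\<lambda>i::nat. if i = 0 then dpmon 0 1 else dpmon 1 0"
  have g: "?g \<in> {..<2} \<rightarrow> carrier (DP2 p)" using dpmon_closed by auto
  have "?g ` {..<2} = {dpmon 0 1, dpmon 1 0}" by (auto simp: numeral_2_eq_2 lessThan_Suc)
  show "xy_ideal p \<subseteq> ?M"
  proof
    fix h assume "h \<in> xy_ideal p"
    then obtain a where a: "a \<in> {..<2} \<rightarrow> carrier (DP2 p)" "h = lin_comb (DP2 p) 2 a ?g"
      using DP2.genideal_lin_comb[OF g] \<open>?g ` {..<2} = _\<close> by metis
    then have "h = dpmon 1 0 \<otimes>\<^bsub>DP2 p\<^esub> a 1 \<oplus>\<^bsub>DP2 p\<^esub> dpmon 0 1 \<otimes>\<^bsub>DP2 p\<^esub> a 0"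
      using g by (intro dp_egf_inject)
        (simp add: dp_egf_lin_comb dp_egf_add dp_egf_mult numeral_2_eq_2 lessThan_Suc algebra_simps)
    then show "h \<in> ?M" using a(1) by fastforce
  qed
next
  have "dpmon 1 0 \<in> xy_ideal p" "dpmon 0 1 \<in> xy_ideal p"
    using DP2.genideal_self[of "{dpmon 0 1, dpmon 1 0}" p] by (auto simp: dpmon_closed)
  then show "?M \<subseteq> xy_ideal p"
    using xy_ideal_ideal[of p]
    by (auto intro: ideal.I_r_closed additive_subgroup.a_closed ideal.axioms(1))
qed

lemma xy_ideal_restrict:
  assumes "f \<in> xy_ideal p"
  shows "(\<lambda>k. if k \<in> S then f k else 0) \<in> xy_ideal p"
proof -
  obtain u v where uv: "u \<in> carrier (DP2 p)" "v \<in> carrier (DP2 p)"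
    "f = dpmon 1 0 \<otimes>\<^bsub>DP2 p\<^esub> u \<oplus>\<^bsub>DP2 p\<^esub> dpmon 0 1 \<otimes>\<^bsub>DP2 p\<^esub> v"
    using assms unfolding xy_ideal_eq by blast
  define u' where "u' k = (if k \<in> {k. (fst k + 1, snd k) \<in> S} then u k else 0)" for k
  define v' where "v' k = (if k \<in> {k. (fst k, snd k + 1) \<in> S} then v k else 0)" for k
  have "(\<lambda>k. if k \<in> S then f k else 0) = dpmon 1 0 \<otimes>\<^bsub>DP2 p\<^esub> u' \<oplus>\<^bsub>DP2 p\<^esub> dpmon 0 1 \<otimes>\<^bsub>DP2 p\<^esub> v'"
  proof (rule ext, clarify)
    fix a b
    show "(if (a, b) \<in> S then f (a, b) else 0) =
      (dpmon 1 0 \<otimes>\<^bsub>DP2 p\<^esub> u' \<oplus>\<^bsub>DP2 p\<^esub> dpmon 0 1 \<otimes>\<^bsub>DP2 p\<^esub> v') (a, b)"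
      unfolding uv(3) DP2_add dpmon_10_mult dpmon_01_mult by (auto simp: u'_def v'_def)
  qed
  moreover have "u' \<in> carrier (DP2 p)" "v' \<in> carrier (DP2 p)"
    using uv DP2_restrict_closed unfolding u'_def v'_def by blast+
  ultimately show ?thesis unfolding xy_ideal_eq by blast
qed

lemma xy_ideal_x_homogeneous: "x_homogeneous (xy_ideal p)"
  unfolding x_homogeneous_def
proof (intro ballI allI)
  fix f d assume "f \<in> xy_ideal p"
  have slice: "(\<lambda>(i, j). if i = d then f (i, j) else 0) =
      (\<lambda>k. if k \<in> {k. fst k = d} then f k else 0)"
    by auto
  show "(\<lambda>(i, j). if i = d then f (i, j) else 0) \<in> xy_ideal p"
    unfolding slice by (rule xy_ideal_restrict[OF \<open>f \<in> xy_ideal p\<close>])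
qed

lemma xy_ideal_bi_homogeneous: "bi_homogeneous (xy_ideal p)"
  unfolding bi_homogeneous_def using xy_ideal_restrict[of _ p "{_}"] by simp

lemma xy_ideal_decompose_family:
  assumes "\<forall>i<n. g i \<in> xy_ideal p"
  obtains u v where "u \<in> {..<n} \<rightarrow> carrier (DP2 p)" "v \<in> {..<n} \<rightarrow> carrier (DP2 p)"
    "\<forall>i<n. g i = dpmon 1 0 \<otimes>\<^bsub>DP2 p\<^esub> u i \<oplus>\<^bsub>DP2 p\<^esub> dpmon 0 1 \<otimes>\<^bsub>DP2 p\<^esub> v i"
proof -
  have "\<forall>i. \<exists>u v. i < n \<longrightarrow> u \<in> carrier (DP2 p) \<and> v \<in> carrier (DP2 p) \<and>
      g i = dpmon 1 0 \<otimes>\<^bsub>DP2 p\<^esub> u \<oplus>\<^bsub>DP2 p\<^esub> dpmon 0 1 \<otimes>\<^bsub>DP2 p\<^esub> v"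
    using assms unfolding xy_ideal_eq by blast
  then obtain u v where "\<forall>i. i < n \<longrightarrow> u i \<in> carrier (DP2 p) \<and> v i \<in> carrier (DP2 p) \<and>
      g i = dpmon 1 0 \<otimes>\<^bsub>DP2 p\<^esub> u i \<oplus>\<^bsub>DP2 p\<^esub> dpmon 0 1 \<otimes>\<^bsub>DP2 p\<^esub> v i"
    by metis
  then have "u \<in> {..<n} \<rightarrow> carrier (DP2 p)" "v \<in> {..<n} \<rightarrow> carrier (DP2 p)"
    "\<forall>i<n. g i = dpmon 1 0 \<otimes>\<^bsub>DP2 p\<^esub> u i \<oplus>\<^bsub>DP2 p\<^esub> dpmon 0 1 \<otimes>\<^bsub>DP2 p\<^esub> v i"
    by auto
  then show ?thesis by (rule that)
qed

lemma DP2_lin_comb_xy_decomposition: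
  assumes s: "s \<in> {..<n} \<rightarrow> carrier (DP2 p)"
    and u: "u \<in> {..<n} \<rightarrow> carrier (DP2 p)" and v: "v \<in> {..<n} \<rightarrow> carrier (DP2 p)"
    and g: "\<forall>i<n. g i = dpmon 1 0 \<otimes>\<^bsub>DP2 p\<^esub> u i \<oplus>\<^bsub>DP2 p\<^esub> dpmon 0 1 \<otimes>\<^bsub>DP2 p\<^esub> v i"
  shows "lin_comb (DP2 p) n s g = dpmon 1 0 \<otimes>\<^bsub>DP2 p\<^esub> lin_comb (DP2 p) n s u
                               \<oplus>\<^bsub>DP2 p\<^esub> dpmon 0 1 \<otimes>\<^bsub>DP2 p\<^esub> lin_comb (DP2 p) n s v"
proof (rule dp_egf_inject)
  have g_closed: "g \<in> {..<n} \<rightarrow> carrier (DP2 p)"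
    using g u v by (auto intro!: DP2_add_closed DP2_mult_closed dpmon_closed)
  have "dp_egf (lin_comb (DP2 p) n s g) = (\<Sum>i<n. dp_egf (s i) *
          (dp_egf (dpmon 1 0) * dp_egf (u i) + dp_egf (dpmon 0 1) * dp_egf (v i)))"
    using s g_closed g by (auto simp: dp_egf_lin_comb dp_egf_add dp_egf_mult intro!: sum.cong)
  then show "dp_egf (lin_comb (DP2 p) n s g) = dp_egf (dpmon 1 0 \<otimes>\<^bsub>DP2 p\<^esub> lin_comb (DP2 p) n s u
                               \<oplus>\<^bsub>DP2 p\<^esub> dpmon 0 1 \<otimes>\<^bsub>DP2 p\<^esub> lin_comb (DP2 p) n s v)"
    using s u v
    by (simp add: dp_egf_lin_comb dp_egf_add dp_egf_mult sum_distrib_left sum.distrib algebra_simps)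
qed

text \<open>Comparing coefficients of x^[a+1] y^[b] in the relation gives
  (a + 1) w(a, b) = -b z(a + 1, b - 1), and b (P choose b) = P (P - 1 choose b - 1) absorbs the
  denominator P.\<close>

lemma xy_syzygy_coeff_in_Zloc:
  assumes z: "z \<in> carrier (DP2 p)"
    and rel: "dpmon 1 0 \<otimes>\<^bsub>DP2 p\<^esub> w \<oplus>\<^bsub>DP2 p\<^esub> dpmon 0 1 \<otimes>\<^bsub>DP2 p\<^esub> z = \<zero>\<^bsub>DP2 p\<^esub>"
    and deg: "\<forall>i j. w (i, j) \<noteq> 0 \<longrightarrow> i < N" and "j \<le> P"
  shows "of_nat (fact N * (P choose j)) * w (a, P - j) / of_nat P \<in> Zloc p"
proof (cases "w (a, P - j) = 0")
  case False
  define b where "b = P - j"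
  have "(dpmon 1 0 \<otimes>\<^bsub>DP2 p\<^esub> w \<oplus>\<^bsub>DP2 p\<^esub> dpmon 0 1 \<otimes>\<^bsub>DP2 p\<^esub> z) (a + 1, b) = 0"
    using rel by (simp add: DP2_zero)
  then have rel_ab: "of_nat (a + 1) * w (a, b) + (if 1 \<le> b then of_nat b * z (a + 1, b - 1) else 0) = 0"
    unfolding DP2_add dpmon_10_mult dpmon_01_mult by simp
  then obtain b' where b': "b = Suc b'" using False by (cases b) (auto simp: b_def)
  then obtain P' where P': "P = Suc P'" by (cases P) (auto simp: b_def)
  have rel_w: "of_nat (a + 1) * w (a, b) = - (of_nat b * z (a + 1, b'))"
    using rel_ab b' by (simp add: eq_neg_iff_add_eq_0)
  have "a + 1 dvd fact N" using deg False by (intro dvd_fact) auto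
  then obtain q where q: "fact N = (a + 1) * q" by (elim dvdE)
  have "of_nat (fact N * (P choose j)) * w (a, P - j) / of_nat P
      = of_nat q * of_nat (P choose b) * (of_nat (a + 1) * w (a, b)) / (of_nat P :: rat)"
    using \<open>j \<le> P\<close> by (simp add: b_def q binomial_symmetric[of j P] algebra_simps)
  also have "\<dots> = of_nat q * of_nat (P choose b) * - (of_nat b * z (a + 1, b')) / of_nat P"
    by (simp only: rel_w)
  also have "\<dots> = - (of_nat q * of_nat (b * (P choose b)) * z (a + 1, b') / of_nat P)"
    by (simp add: algebra_simps)
  also have "\<dots> = - (of_nat q * of_nat (P' choose b') * z (a + 1, b'))"
    using Suc_times_binomial[of b' P'] b' P' by (simp add: field_simps)
  also have "\<dots> \<in> Zloc p"
    using z by (auto simp: DP2_carrier intro!: Zloc_uminus Zloc_mult)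
  finally show ?thesis .
qed simp

lemma xy_syzygies_span_coeff_in_Zloc:
  fixes m :: nat
  assumes c: "c \<in> {..<m} \<rightarrow> carrier (DP2 p)" and w: "w \<in> {..<m} \<rightarrow> carrier (DP2 p)"
    and z: "z \<in> {..<m} \<rightarrow> carrier (DP2 p)"
    and rel: "\<forall>k<m. dpmon 1 0 \<otimes>\<^bsub>DP2 p\<^esub> w k \<oplus>\<^bsub>DP2 p\<^esub> dpmon 0 1 \<otimes>\<^bsub>DP2 p\<^esub> z k = \<zero>\<^bsub>DP2 p\<^esub>"
    and deg: "\<forall>k<m. \<forall>i j. w k (i, j) \<noteq> 0 \<longrightarrow> i < N"
  shows "of_nat (fact N) * (\<Oplus>\<^bsub>DP2 p\<^esub>k\<in>{..<m}. c k \<otimes>\<^bsub>DP2 p\<^esub> w k) (P - 1, P) / of_nat P \<in> Zloc p"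
proof -
  have "of_nat (fact N) * (c k \<otimes>\<^bsub>DP2 p\<^esub> w k) (P - 1, P) / of_nat P \<in> Zloc p" if "k < m" for k
  proof -
    have "of_nat (fact N) * (c k \<otimes>\<^bsub>DP2 p\<^esub> w k) (P - 1, P) / of_nat P =
        (\<Sum>i\<le>P - 1. \<Sum>j\<le>P. of_nat (P - 1 choose i) * c k (i, j) *
          (of_nat (fact N * (P choose j)) * w k (P - 1 - i, P - j) / of_nat P))"
      unfolding DP2_mult by (simp add: sum_distrib_left sum_divide_distrib algebra_simps)
    also have "\<dots> \<in> Zloc p"
    proof (intro Zloc_sum Zloc_mult Zloc_of_nat)
      fix i j assume "j \<in> {..P}"
      then show "of_nat (fact N * (P choose j)) * w k (P - 1 - i, P - j) / of_nat P \<in> Zloc p"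
        using xy_syzygy_coeff_in_Zloc[of "z k" p "w k" N j P "P - 1 - i"] that z rel deg by auto
      show "c k (i, j) \<in> Zloc p" using c that by (auto simp: DP2_carrier)
    qed
    finally show ?thesis .
  qed
  moreover have "(\<Oplus>\<^bsub>DP2 p\<^esub>k\<in>{..<m}. c k \<otimes>\<^bsub>DP2 p\<^esub> w k) (P - 1, P) = (\<Sum>k<m. (c k \<otimes>\<^bsub>DP2 p\<^esub> w k) (P - 1, P))"
    using c w by (intro DP2_finsum_apply) (auto intro!: DP2_mult_closed)
  ultimately show ?thesis by (auto simp: sum_distrib_left sum_divide_distrib intro!: Zloc_sum)
qed

text \<open>The witness comes from x^[P] y^[P-1] y = P x^[P] y^[P] = x^[P-1] y^[P] x, transported to the
  generators g through expressions of y and x in terms of them.\<close>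

lemma xy_ideal_generators_special_syzygy:
  assumes g: "g \<in> {..<n} \<rightarrow> carrier (DP2 p)" and I: "xy_ideal p = genideal (DP2 p) (g ` {..<n})"
    and u: "u \<in> {..<n} \<rightarrow> carrier (DP2 p)" and v: "v \<in> {..<n} \<rightarrow> carrier (DP2 p)"
    and g_eq: "\<forall>i<n. g i = dpmon 1 0 \<otimes>\<^bsub>DP2 p\<^esub> u i \<oplus>\<^bsub>DP2 p\<^esub> dpmon 0 1 \<otimes>\<^bsub>DP2 p\<^esub> v i"
    and "P \<ge> 1"
  obtains r where "r \<in> syzygies (DP2 p) n g" "lin_comb (DP2 p) n r u (P - 1, P) = -1"
proof -
  have "dpmon 0 1 \<in> genideal (DP2 p) (g ` {..<n})" "dpmon 1 0 \<in> genideal (DP2 p) (g ` {..<n})"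
    unfolding I[symmetric] using DP2.genideal_self[of "{dpmon 0 1, dpmon 1 0}" p]
    by (auto simp: dpmon_closed)
  then obtain a b where a: "a \<in> {..<n} \<rightarrow> carrier (DP2 p)" "dpmon 0 1 = lin_comb (DP2 p) n a g"
    and b: "b \<in> {..<n} \<rightarrow> carrier (DP2 p)" "dpmon 1 0 = lin_comb (DP2 p) n b g"
    using DP2.genideal_lin_comb[OF g] by metis
  define X Y where "X = dpmon P (P - 1)" and "Y = dpmon (P - 1) P"
  have X: "X \<in> carrier (DP2 p)" and Y: "Y \<in> carrier (DP2 p)"
    by (simp_all add: X_def Y_def dpmon_closed)
  define r where "r = (\<lambda>i. X \<otimes>\<^bsub>DP2 p\<^esub> a i \<ominus>\<^bsub>DP2 p\<^esub> Y \<otimes>\<^bsub>DP2 p\<^esub> b i)"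
  have "r \<in> {..<n} \<rightarrow> carrier (DP2 p)"
    using a b X Y by (auto simp: r_def intro!: DP2.minus_closed DP2_mult_closed)
  moreover have "lin_comb (DP2 p) n r g = X \<otimes>\<^bsub>DP2 p\<^esub> dpmon 0 1 \<ominus>\<^bsub>DP2 p\<^esub> Y \<otimes>\<^bsub>DP2 p\<^esub> dpmon 1 0"
    unfolding r_def a(2) b(2) by (rule DP2_lin_comb_smult_diff[OF X Y a(1) b(1) g])
  moreover have "\<dots> = \<zero>\<^bsub>DP2 p\<^esub>"
    unfolding X_def Y_def dpmon_mult_y_eq_mult_x[OF \<open>P \<ge> 1\<close>]
    by (simp add: DP2.minus_eq DP2.r_neg DP2_mult_closed dpmon_closed)
  ultimately have syz: "r \<in> syzygies (DP2 p) n g" by (simp add: syzygies_def)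
  define \<beta> where "\<beta> = lin_comb (DP2 p) n b u"
  have "dpmon 1 0 = lin_comb (DP2 p) n b g" by (rule b(2))
  also have "\<dots> = dpmon 1 0 \<otimes>\<^bsub>DP2 p\<^esub> \<beta> \<oplus>\<^bsub>DP2 p\<^esub> dpmon 0 1 \<otimes>\<^bsub>DP2 p\<^esub> lin_comb (DP2 p) n b v"
    unfolding \<beta>_def by (rule DP2_lin_comb_xy_decomposition[OF b(1) u v g_eq])
  finally have \<beta>_00: "\<beta> (0, 0) = 1" by (rule dpmon_10_cofactor_coeff)
  have "lin_comb (DP2 p) n r u = X \<otimes>\<^bsub>DP2 p\<^esub> lin_comb (DP2 p) n a u \<ominus>\<^bsub>DP2 p\<^esub> Y \<otimes>\<^bsub>DP2 p\<^esub> \<beta>"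
    unfolding r_def \<beta>_def by (rule DP2_lin_comb_smult_diff[OF X Y a(1) b(1) u])
  then have "lin_comb (DP2 p) n r u (P - 1, P) =
      (X \<otimes>\<^bsub>DP2 p\<^esub> lin_comb (DP2 p) n a u) (P - 1, P) - (Y \<otimes>\<^bsub>DP2 p\<^esub> \<beta>) (P - 1, P)"
    using X Y a(1) b(1) u by (simp add: \<beta>_def DP2_minus DP2_mult_closed DP2.lin_comb_closed)
  also have "\<dots> = -1"
    unfolding X_def Y_def dpmon_mult using \<open>P \<ge> 1\<close> \<beta>_00 by simp
  finally show ?thesis using that syz by blast
qed

lemma xy_ideal_not_finitely_presented:
  assumes "prime p"
  shows "\<not> finitely_presented_ideal (DP2 p) (xy_ideal p)"
proof
  assume "finitely_presented_ideal (DP2 p) (xy_ideal p)"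
  then obtain n g and m :: nat and s where g: "g \<in> {..<n} \<rightarrow> carrier (DP2 p)"
    and I: "xy_ideal p = genideal (DP2 p) (g ` {..<n})"
    and syz: "\<forall>k<m. s k \<in> syzygies (DP2 p) n g"
    and gen: "\<forall>r\<in>syzygies (DP2 p) n g. \<exists>c. c \<in> {..<m} \<rightarrow> carrier (DP2 p) \<and>
               (\<forall>i<n. r i = (\<Oplus>\<^bsub>DP2 p\<^esub>k\<in>{..<m}. c k \<otimes>\<^bsub>DP2 p\<^esub> s k i))"
    unfolding finitely_presented_ideal_def by blast
  have "\<forall>i<n. g i \<in> xy_ideal p"
    unfolding I using g DP2.genideal_self[of "g ` {..<n}" p] by auto
  then obtain u v where u: "u \<in> {..<n} \<rightarrow> carrier (DP2 p)" and v: "v \<in> {..<n} \<rightarrow> carrier (DP2 p)"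
    and g_eq: "\<forall>i<n. g i = dpmon 1 0 \<otimes>\<^bsub>DP2 p\<^esub> u i \<oplus>\<^bsub>DP2 p\<^esub> dpmon 0 1 \<otimes>\<^bsub>DP2 p\<^esub> v i"
    by (rule xy_ideal_decompose_family)
  have s: "s k \<in> {..<n} \<rightarrow> carrier (DP2 p)" "lin_comb (DP2 p) n (s k) g = \<zero>\<^bsub>DP2 p\<^esub>" if "k < m" for k
    using syz that unfolding syzygies_def by auto
  define w z where "w k = lin_comb (DP2 p) n (s k) u" and "z k = lin_comb (DP2 p) n (s k) v" for k
  have w: "w \<in> {..<m} \<rightarrow> carrier (DP2 p)" and z: "z \<in> {..<m} \<rightarrow> carrier (DP2 p)"
    using u v by (auto simp: w_def z_def intro!: DP2.lin_comb_closed s(1))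
  have rel: "\<forall>k<m. dpmon 1 0 \<otimes>\<^bsub>DP2 p\<^esub> w k \<oplus>\<^bsub>DP2 p\<^esub> dpmon 0 1 \<otimes>\<^bsub>DP2 p\<^esub> z k = \<zero>\<^bsub>DP2 p\<^esub>"
    using s DP2_lin_comb_xy_decomposition[OF _ u v g_eq] by (simp add: w_def z_def)
  obtain N where deg: "\<forall>k<m. \<forall>i j. w k (i, j) \<noteq> 0 \<longrightarrow> i < N"
    using DP2_x_degree_bound[OF w] by blast
  define P where "P = p ^ fact N"
  have "fact N < (2::nat) ^ fact N" by simp
  also have "\<dots> \<le> P" unfolding P_def using prime_gt_1_nat[OF assms] by (intro power_mono) auto
  finally have "fact N < P" .
  then have "P \<ge> 1" by simp
  then obtain r where r: "r \<in> syzygies (DP2 p) n g"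
    and r_val: "lin_comb (DP2 p) n r u (P - 1, P) = -1"
    by (rule xy_ideal_generators_special_syzygy[OF g I u v g_eq])
  then obtain c where c: "c \<in> {..<m} \<rightarrow> carrier (DP2 p)"
    and rc: "\<forall>i<n. r i = (\<Oplus>\<^bsub>DP2 p\<^esub>k\<in>{..<m}. c k \<otimes>\<^bsub>DP2 p\<^esub> s k i)"
    using gen by blast
  have "lin_comb (DP2 p) n r u = (\<Oplus>\<^bsub>DP2 p\<^esub>k\<in>{..<m}. c k \<otimes>\<^bsub>DP2 p\<^esub> w k)"
    unfolding w_def using DP2_lin_comb_finsum_coeffs[OF c _ u rc] s by blast
  then have "of_nat (fact N) * (-1) / of_nat P \<in> Zloc p"
    using xy_syzygies_span_coeff_in_Zloc[OF c w z rel deg, of P] r_val by simp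
  then have "P dvd fact N"
    unfolding P_def using Zloc_uminus prime_gt_0_nat[OF assms]
    by (intro prime_power_dvd_if_div_in_Zloc) fastforce+
  then show False using \<open>fact N < P\<close> by (simp add: nat_dvd_not_less)
qed

theorem mainTheorem4:
  fixes p :: nat
  assumes "prime p"
  shows "\<not> finitely_presented_ideal (DP2 p) (genideal (DP2 p) {dpmon 0 1, dpmon 1 0})
       \<and> \<not> graded_coherent (DP2 p) x_homogeneous
       \<and> \<not> coherent (DP2 p)
       \<and> \<not> graded_coherent (DP2 p) bi_homogeneous"
  using xy_ideal_not_finitely_presented[OF assms] xy_ideal_ideal xy_ideal_finitely_generated
    xy_ideal_x_homogeneous xy_ideal_bi_homogeneous
  unfolding graded_coherent_def coherent_def by blast

end
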